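(* Let $G=(L\cup R,E)$ be a Tanner graph without parallel edges and with no node of degree less than 2. (i) Suppose $G$ is left-regular with left degree $d_l\ge 2$, and let $\mathcal{S}\subset L$ be a nonempty $(a,b)$ trapping set whose induced subgraph $G(\mathcal{S})$ is connected and contains no cycle. Then $b\ge a(d_l-2)+2$, with equality if $\mathcal{S}$ is elementary. (ii) The set of variable nodes of any shortest cycle (of length equal to the girth $g$) of $G$ is an elementary trapping set. (iii) For every $\mathcal{S}\in\mathcal{T}$, the induced subgraph $G(\mathcal{S})$ contains at least one cycle. (iv) If $G$ is left-regular with left degree at least 2 and $\mathcal{S}\subset L$ is a nonempty absorbing set, then $G(\mathcal{S})$ contains at least one cycle. (v) If $G$ is left-regular with left degree $l\ge 3$ and $\mathcal{S}\subset L$ is a nonempty ZP trapping set, then $G(\mathcal{S})$ contains at least one cycle.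
   Context: A Tanner graph is a bipartite graph $G=(L\cup R,E)$ with variable nodes $L$ and check nodes $R$; it is left-regular with left degree $d_l$ if every variable node has degree $d_l$. For $\mathcal{S}\subset L$, $\Gamma(\mathcal{S})$ is the set of neighbors of $\mathcal{S}$ in $R$, and the induced subgraph $G(\mathcal{S})$ has node set $\mathcal{S}\cup\Gamma(\mathcal{S})$ and all edges of $G$ between $\mathcal{S}$ and $\Gamma(\mathcal{S})$. $\Gamma_{\mathrm{o}}(\mathcal{S})$ and $\Gamma_{\mathrm{e}}(\mathcal{S})$ are the check nodes of $\Gamma(\mathcal{S})$ with odd, respectively even, degree in $G(\mathcal{S})$. $\mathcal{S}$ is an $(a,b)$ trapping set if $|\mathcal{S}|=a$ and $|\Gamma_{\mathrm{o}}(\mathcal{S})|=b$ (any subset of $L$ is a trapping set for some $(a,b)$); it is elementary if every check node of $G(\mathcal{S})$ has degree one or two in $G(\mathcal{S})$. $\mathcal{S}$ is an absorbing set if every node of $\mathcal{S}$ has strictly more neighbors in $\Gamma_{\mathrm{e}}(\mathcal{S})$ than in $\Gamma_{\mathrm{o}}(\mathcal{S})$. For $G$ left-regular with left degree $l$, $\mathcal{S}$ is a ZP (Zyablov–Pinsker) trapping set if every node of $\mathcal{S}$ is adjacent to fewer than $l-\lfloor (l-1)/2\rfloor$ nodes of $\Gamma_{\mathrm{o}}(\mathcal{S})$. $\mathcal{T}$ denotes the set of all trapping sets $\mathcal{S}\subset L$ such that $G(\mathcal{S})$ is connected and every node of $\mathcal{S}$ is adjacent to at least two nodes of $\Gamma_{\mathrm{e}}(\mathcal{S})$.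 *)

theory Defs
  imports Main
begin

text \<open>A Tanner graph: variable nodes L (type 'v), check nodes R (type 'c),
  edges E as a set of pairs (v,c); a set of pairs has no parallel edges.\<close>

definition tanner_graph :: "'v set \<Rightarrow> 'c set \<Rightarrow> ('v \<times> 'c) set \<Rightarrow> bool" where
  "tanner_graph L R E \<longleftrightarrow> finite L \<and> finite R \<and> E \<subseteq> L \<times> R"

definition vdeg :: "('v \<times> 'c) set \<Rightarrow> 'v \<Rightarrow> nat" where
  "vdeg E v = card {c. (v, c) \<in> E}"

definition cdeg :: "('v \<times> 'c) set \<Rightarrow> 'c \<Rightarrow> nat" where
  "cdeg E c = card {v. (v, c) \<in> E}"

definition min_degree_2 :: "'v set \<Rightarrow> 'c set \<Rightarrow> ('v \<times> 'c) set \<Rightarrow> bool" where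
  "min_degree_2 L R E \<longleftrightarrow> (\<forall>v\<in>L. 2 \<le> vdeg E v) \<and> (\<forall>c\<in>R. 2 \<le> cdeg E c)"

definition left_regular :: "'v set \<Rightarrow> ('v \<times> 'c) set \<Rightarrow> nat \<Rightarrow> bool" where
  "left_regular L E d \<longleftrightarrow> (\<forall>v\<in>L. vdeg E v = d)"

definition Nbr :: "('v \<times> 'c) set \<Rightarrow> 'v set \<Rightarrow> 'c set" where
  "Nbr E S = {c. \<exists>v\<in>S. (v, c) \<in> E}"

definition degS :: "('v \<times> 'c) set \<Rightarrow> 'v set \<Rightarrow> 'c \<Rightarrow> nat" where
  "degS E S c = card {v\<in>S. (v, c) \<in> E}"

definition odd_checks :: "('v \<times> 'c) set \<Rightarrow> 'v set \<Rightarrow> 'c set" where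
  "odd_checks E S = {c\<in>Nbr E S. odd (degS E S c)}"

definition even_checks :: "('v \<times> 'c) set \<Rightarrow> 'v set \<Rightarrow> 'c set" where
  "even_checks E S = {c\<in>Nbr E S. even (degS E S c)}"

definition trapping_set :: "'v set \<Rightarrow> ('v \<times> 'c) set \<Rightarrow> 'v set \<Rightarrow> nat \<Rightarrow> nat \<Rightarrow> bool" where
  "trapping_set L E S a b \<longleftrightarrow> S \<subseteq> L \<and> card S = a \<and> card (odd_checks E S) = b"

definition elementary :: "('v \<times> 'c) set \<Rightarrow> 'v set \<Rightarrow> bool" where
  "elementary E S \<longleftrightarrow> (\<forall>c\<in>Nbr E S. degS E S c = 1 \<or> degS E S c = 2)"

definition absorbing_set :: "('v \<times> 'c) set \<Rightarrow> 'v set \<Rightarrow> bool" where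
  "absorbing_set E S \<longleftrightarrow> (\<forall>v\<in>S.
     card {c\<in>odd_checks E S. (v, c) \<in> E} < card {c\<in>even_checks E S. (v, c) \<in> E})"

definition ZP_trapping_set :: "('v \<times> 'c) set \<Rightarrow> nat \<Rightarrow> 'v set \<Rightarrow> bool" where
  "ZP_trapping_set E l S \<longleftrightarrow> (\<forall>v\<in>S.
     card {c\<in>odd_checks E S. (v, c) \<in> E} < l - (l - 1) div 2)"

text \<open>The induced subgraph G(S), as an undirected graph on Inl ` S \<union> Inr ` \<Gamma>(S).
  Its edges are exactly the edges of G incident to S.  The whole graph G is gadj E L.\<close>
definition gverts :: "('v \<times> 'c) set \<Rightarrow> 'v set \<Rightarrow> ('v + 'c) set" where
  "gverts E S = Inl ` S \<union> Inr ` Nbr E S"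

definition gadj :: "('v \<times> 'c) set \<Rightarrow> 'v set \<Rightarrow> ('v + 'c) \<Rightarrow> ('v + 'c) \<Rightarrow> bool" where
  "gadj E S x y \<longleftrightarrow> (\<exists>v c. v \<in> S \<and> (v, c) \<in> E \<and>
      ((x = Inl v \<and> y = Inr c) \<or> (x = Inr c \<and> y = Inl v)))"

definition is_cycle :: "('a \<Rightarrow> 'a \<Rightarrow> bool) \<Rightarrow> 'a list \<Rightarrow> bool" where
  "is_cycle adj xs \<longleftrightarrow> 3 \<le> length xs \<and> distinct xs \<and>
     (\<forall>i < length xs. adj (xs ! i) (xs ! ((i + 1) mod length xs)))"

definition has_cycle :: "('a \<Rightarrow> 'a \<Rightarrow> bool) \<Rightarrow> bool" where
  "has_cycle adj \<longleftrightarrow> (\<exists>xs. is_cycle adj xs)"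

text \<open>Connected graphs are nonempty by convention.\<close>
definition induced_connected :: "('v \<times> 'c) set \<Rightarrow> 'v set \<Rightarrow> bool" where
  "induced_connected E S \<longleftrightarrow> gverts E S \<noteq> {} \<and>
     (\<forall>x\<in>gverts E S. \<forall>y\<in>gverts E S. (gadj E S)\<^sup>*\<^sup>* x y)"

definition class_T :: "'v set \<Rightarrow> ('v \<times> 'c) set \<Rightarrow> 'v set set" where
  "class_T L E = {S. S \<subseteq> L \<and> induced_connected E S \<and>
     (\<forall>v\<in>S. 2 \<le> card {c\<in>even_checks E S. (v, c) \<in> E})}"

end

theory Submission
  imports Defs
begin

(*
  (i) An acyclic connected G(S) is a tree, so its a + |\<Gamma>(S)| nodes outnumber its a d_l edges by
  one.  Counting the same edges at the check nodes, a check of degree d contributes d + [d odd],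
  which is at least 2, with equality iff d is 1 or 2; hence a d_l + b \<ge> 2 |\<Gamma>(S)| = 2 (a d_l + 1 - a).

  (ii) If a check c had three variable neighbours on a shortest cycle C, C could be shortened:
  if c lies on C, by the chord from c to a neighbour not adjacent to it along C; otherwise two of
  the three neighbours are at distance at most |C|/3 along C, and the detour through c is shorter
  than C because cycles of a bipartite graph have length at least 4.

  (iii)-(v) In each case every variable node of S has two neighbours among the even-degree checks
  of G(S), and every such check has even positive, hence at least 2, degree.  So the subgraph
  spanned by S and these checks has minimum degree 2, and closing up a longest path yields a cycle.
*)

section \<open>Cycles and trees in undirected graphs\<close>

lemma successively_take: "successively P xs \<Longrightarrow> successively P (take n xs)"
  by (metis append_take_drop_id successively_append_iff)

lemma successively_drop: "successively P xs \<Longrightarrow> successively P (drop n xs)"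
  by (metis append_take_drop_id successively_append_iff)

lemma obtain_three_indices:
  assumes "X \<subseteq> set xs" "3 \<le> card X"
  obtains i j k where "i < j" "j < k" "k < length xs" "xs ! i \<in> X" "xs ! j \<in> X" "xs ! k \<in> X"
proof -
  define P where "P = {i. i < length xs \<and> xs ! i \<in> X}"
  have "finite P"
    by (simp add: P_def)
  have "X = nth xs ` P"
    using assms(1) by (fastforce simp: P_def in_set_conv_nth image_iff)
  then have "3 \<le> card P"
    using assms(2) card_image_le[OF \<open>finite P\<close>, of "nth xs"] by simp
  then have "P \<noteq> {}"
    by auto
  have "card {Min P, Max P} \<le> 2"
    by (simp add: card_insert_if)
  then have "card (P - {Min P, Max P}) \<noteq> 0"
    using diff_card_le_card_Diff[of "{Min P, Max P}" P] \<open>3 \<le> card P\<close> by simp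
  then obtain j where "j \<in> P" "j \<noteq> Min P" "j \<noteq> Max P"
    by (metis Diff_iff card.empty ex_in_conv insertCI)
  then have "Min P < j" "j < Max P"
    using \<open>finite P\<close> by (auto simp: le_neq_trans)
  then show ?thesis
    using that[of "Min P" j "Max P"] Min_in[OF \<open>finite P\<close> \<open>P \<noteq> {}\<close>] Max_in[OF \<open>finite P\<close> \<open>P \<noteq> {}\<close>]
      \<open>j \<in> P\<close> by (auto simp: P_def)
qed

lemma two_le_card_imp_distinct:
  assumes "2 \<le> card A"
  shows "\<exists>x\<in>A. \<exists>y\<in>A. x \<noteq> y"
proof -
  have "finite A"
    by (rule card_ge_0_finite) (use assms in linarith)
  moreover have "\<not> card A \<le> Suc 0"
    using assms by linarith
  ultimately show ?thesis
    using card_le_Suc0_iff_eq by blast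
qed

lemma is_cycle_iff:
  "is_cycle adj xs \<longleftrightarrow>
     3 \<le> length xs \<and> distinct xs \<and> successively adj xs \<and> adj (last xs) (hd xs)"
proof -
  have "(\<forall>i < length xs. adj (xs ! i) (xs ! ((i + 1) mod length xs))) \<longleftrightarrow>
        successively adj xs \<and> adj (last xs) (hd xs)" if "xs \<noteq> []"
  proof -
    have "(\<forall>i < length xs. adj (xs ! i) (xs ! ((i + 1) mod length xs))) \<longleftrightarrow>
          (\<forall>i. Suc i < length xs \<longrightarrow> adj (xs ! i) (xs ! Suc i)) \<and>
          adj (xs ! (length xs - 1)) (xs ! 0)"
    proof (intro iffI conjI allI impI)
      fix i assume "\<forall>i < length xs. adj (xs ! i) (xs ! ((i + 1) mod length xs))" "Suc i < length xs"
      then show "adj (xs ! i) (xs ! Suc i)" by (metis Suc_eq_plus1 Suc_lessD mod_less)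
    next
      assume "\<forall>i < length xs. adj (xs ! i) (xs ! ((i + 1) mod length xs))"
      moreover have "length xs - 1 < length xs" "length xs - 1 + 1 = length xs"
        using that by auto
      ultimately show "adj (xs ! (length xs - 1)) (xs ! 0)"
        by (metis mod_self)
    next
      fix i assume "(\<forall>i. Suc i < length xs \<longrightarrow> adj (xs ! i) (xs ! Suc i)) \<and>
          adj (xs ! (length xs - 1)) (xs ! 0)" "i < length xs"
      then show "adj (xs ! i) (xs ! ((i + 1) mod length xs))"
      proof (cases "Suc i = length xs")
        case True
        then have "i = length xs - 1" "(i + 1) mod length xs = 0"
          by simp_all
        with \<open>(\<forall>i. _) \<and> _\<close> show ?thesis
          by simp
      qed simp
    qed
    then show ?thesis
      using that by (simp add: successively_conv_nth last_conv_nth hd_conv_nth)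
  qed
  then show ?thesis
    unfolding is_cycle_def by (cases "xs = []") simp_all
qed

lemma is_cycle_rotate1:
  assumes "is_cycle adj xs"
  shows "is_cycle adj (rotate1 xs)"
proof (cases xs)
  case (Cons x ys)
  with assms have "ys \<noteq> []" "successively adj (x # ys)" "adj (last ys) x"
    by (auto simp: is_cycle_iff split: if_splits)
  then show ?thesis
    using assms Cons by (auto simp: is_cycle_iff successively_append_iff successively_Cons)
qed (use assms in \<open>simp add: is_cycle_def\<close>)

lemma is_cycle_rotate:
  "is_cycle adj xs \<Longrightarrow> is_cycle adj (rotate k xs)"
  by (induction k) (simp_all add: is_cycle_rotate1)

lemma is_cycle_rotate_to_hd:
  assumes "is_cycle adj xs" "x \<in> set xs"
  obtains ys where "is_cycle adj ys" "set ys = set xs" "length ys = length xs" "hd ys = x"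
proof -
  obtain k where "k < length xs" "xs ! k = x"
    using assms(2) by (auto simp: in_set_conv_nth)
  then have "hd (rotate k xs) = x"
    by (subst hd_rotate_conv_nth) auto
  then show ?thesis
    using that[of "rotate k xs"] is_cycle_rotate[OF assms(1)] by simp
qed

lemma is_cycle_chord:
  assumes "is_cycle adj xs" "2 \<le> e" "e < length xs" "adj (xs ! e) (xs ! 0)"
  shows "is_cycle adj (take (e + 1) xs)"
proof -
  have "last (take (e + 1) xs) = xs ! e" "hd (take (e + 1) xs) = xs ! 0"
    using assms(3) by (simp add: take_Suc_conv_app_nth, cases xs, simp_all)
  then show ?thesis
    using assms by (auto simp: is_cycle_iff successively_take)
qed

lemma is_cycle_detour:
  assumes "is_cycle adj xs" "i < length xs" "0 < d" "d < length xs" "z \<notin> set xs"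
    and "adj (xs ! ((i + d) mod length xs)) z" "adj z (xs ! i)"
  shows "is_cycle adj (take (d + 1) (rotate i xs) @ [z])"
proof -
  let ?ys = "rotate i xs"
  have "is_cycle adj ?ys"
    using assms(1) by (rule is_cycle_rotate)
  then have "successively adj (take (d + 1) ?ys)"
    by (simp add: is_cycle_iff successively_take)
  moreover have "last (take (d + 1) ?ys) = ?ys ! d"
    using assms(4) by (simp add: take_Suc_conv_app_nth)
  then have "last (take (d + 1) ?ys) = xs ! ((i + d) mod length xs)"
    using assms(4) by (simp add: nth_rotate)
  moreover have "hd (take (d + 1) ?ys) = xs ! i"
    using assms(2) by (simp, subst hd_rotate_conv_nth, auto)
  ultimately show ?thesis
    using assms \<open>is_cycle adj ?ys\<close>
    by (auto simp: is_cycle_iff successively_append_iff hd_append dest: in_set_takeD)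
qed

lemma has_cycle_mono:
  "has_cycle adj \<Longrightarrow> (\<And>x y. adj x y \<Longrightarrow> adj' x y) \<Longrightarrow> has_cycle adj'"
  unfolding has_cycle_def is_cycle_def by blast

lemma has_cycle_if_min_degree_2:
  assumes "finite V" "V \<noteq> {}" "irreflp adj"
    and two_nbrs: "\<And>x. x \<in> V \<Longrightarrow> \<exists>y\<in>V. \<exists>z\<in>V. y \<noteq> z \<and> adj x y \<and> adj x z"
  shows "has_cycle adj"
proof -
  define path where "path xs \<longleftrightarrow> xs \<noteq> [] \<and> distinct xs \<and> set xs \<subseteq> V \<and> successively adj xs" for xs
  obtain x0 where "x0 \<in> V"
    using assms(2) by blast
  then have "path [x0]"
    by (simp add: path_def)
  moreover have "length xs < card V + 1" if "path xs" for xs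
    using that assms(1) by (metis path_def card_mono distinct_card less_Suc_eq_le Suc_eq_plus1)
  ultimately obtain xs where "path xs" and longest: "\<And>ys. path ys \<Longrightarrow> length ys \<le> length xs"
    using Lattices_Big.ex_has_greatest_nat[of path "[x0]" length "card V + 1"] by blast
  define n where "n = length xs"
  have xs: "xs \<noteq> []" "distinct xs" "set xs \<subseteq> V" "successively adj xs"
    using \<open>path xs\<close> by (auto simp: path_def)
  have "last xs \<in> V"
    using xs by auto
  \<comment> \<open>a neighbour of the endpoint other than its predecessor (for a one-vertex path,
    \<open>rev xs ! 1\<close> is just some unspecified value)\<close>
  then obtain w where w: "w \<in> V" "adj (last xs) w" "w \<noteq> rev xs ! 1"
    using two_nbrs by metis
  have "w \<in> set xs"
  proof (rule ccontr)
    assume "w \<notin> set xs"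
    then have "path (xs @ [w])"
      using xs w by (simp add: path_def successively_append_iff)
    then show False
      using longest by fastforce
  qed
  then obtain j where j: "j < n" "xs ! j = w"
    by (auto simp: in_set_conv_nth n_def)
  have "j \<noteq> n - 1"
    using j w(2) assms(3) xs(1) by (auto simp: last_conv_nth n_def irreflp_def)
  moreover have "j \<noteq> n - 2"
  proof
    assume "j = n - 2"
    with j(1) \<open>j \<noteq> n - 1\<close> have "rev xs ! 1 = xs ! j"
      by (simp add: rev_nth n_def numeral_2_eq_2)
    with j(2) w(3) show False
      by simp
  qed
  ultimately have "j + 3 \<le> n"
    using j(1) by linarith
  then have "is_cycle adj (drop j xs)"
    using xs j w(2) by (auto simp: is_cycle_iff successively_drop hd_drop_conv_nth n_def)
  then show ?thesis
    unfolding has_cycle_def by blast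
qed

lemma rtranclp_avoiding_leaf:
  assumes "adj\<^sup>*\<^sup>* x y" "x \<noteq> u" "y \<noteq> u" "symp adj" "\<And>z. adj u z \<Longrightarrow> z = w"
  shows "(\<lambda>a b. adj a b \<and> a \<noteq> u \<and> b \<noteq> u)\<^sup>*\<^sup>* x y"
proof -
  let ?adj' = "\<lambda>a b. adj a b \<and> a \<noteq> u \<and> b \<noteq> u"
  \<comment> \<open>a walk that reaches the leaf u has just passed through w\<close>
  have "?adj'\<^sup>*\<^sup>* x (if y = u then w else y)"
    using assms(1)
  proof (induction rule: rtranclp_induct)
    case base
    then show ?case using assms(2) by simp
  next
    case (step y z)
    then show ?case
      using assms(4,5) by (cases "y = u"; cases "z = u")
        (auto intro: rtranclp.rtrancl_into_rtrancl dest: sympD)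
  qed
  then show ?thesis
    using assms(3) by simp
qed

lemma acyclic_connected_obtains_leaf:
  assumes "finite V" "2 \<le> card V" "\<And>x y. adj x y \<Longrightarrow> y \<in> V" "irreflp adj"
    and conn: "\<forall>x\<in>V. \<forall>y\<in>V. adj\<^sup>*\<^sup>* x y" and "\<not> has_cycle adj"
  obtains u w where "u \<in> V" "adj u w" "\<And>z. adj u z \<Longrightarrow> z = w"
proof -
  have "\<exists>u\<in>V. \<exists>w. adj u w \<and> (\<forall>z. adj u z \<longrightarrow> z = w)"
  proof (rule ccontr)
    assume no_leaf: "\<not> ?thesis"
    have "\<exists>y\<in>V. \<exists>z\<in>V. y \<noteq> z \<and> adj x y \<and> adj x z" if "x \<in> V" for x
    proof -
      obtain x' where "x' \<in> V" "x' \<noteq> x"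
        using assms(1,2) by (metis card_le_Suc0_iff_eq not_less_eq_eq numeral_2_eq_2)
      then obtain y where "adj x y"
        using conn \<open>x \<in> V\<close> by (metis converse_rtranclpE)
      moreover obtain z where "adj x z" "z \<noteq> y"
        using no_leaf \<open>x \<in> V\<close> \<open>adj x y\<close> by blast
      ultimately show ?thesis
        using assms(3) by blast
    qed
    then have "has_cycle adj"
      using has_cycle_if_min_degree_2[OF assms(1) _ assms(4)] assms(2) by fastforce
    with assms(6) show False ..
  qed
  then show ?thesis
    using that by blast
qed

lemma card_arcs_tree:
  assumes "finite V" "V \<noteq> {}" "\<And>x y. adj x y \<Longrightarrow> x \<in> V \<and> y \<in> V" "symp adj" "irreflp adj"
    and "\<forall>x\<in>V. \<forall>y\<in>V. adj\<^sup>*\<^sup>* x y" "\<not> has_cycle adj"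
  shows "card {(x, y). adj x y} + 2 = 2 * card V"
  using assms
proof (induction "card V" arbitrary: V adj rule: less_induct)
  case less
  show ?case
  proof (cases "card V = 1")
    case True
    then obtain x where "V = {x}"
      by (rule card_1_singletonE)
    then have "{(x, y). adj x y} = {}"
      using less.prems(3,5) by (auto simp: irreflp_def)
    then have "card {(x, y). adj x y} = 0"
      by (metis card.empty)
    with True show ?thesis
      by simp
  next
    case False
    moreover have "card V \<noteq> 0"
      using less.prems(1,2) by simp
    ultimately have "2 \<le> card V"
      by linarith
    then obtain u w where leaf: "u \<in> V" "adj u w" "\<And>z. adj u z \<Longrightarrow> z = w"
      using acyclic_connected_obtains_leaf[of V adj] less.prems by blast
    define adj' where "adj' a b \<longleftrightarrow> adj a b \<and> a \<noteq> u \<and> b \<noteq> u" for a b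
    have "w \<noteq> u" "w \<in> V"
      using leaf(2) less.prems(3,5) by (metis irreflpD)+
    have "card {(x, y). adj' x y} + 2 = 2 * card (V - {u})"
    proof (rule less.hyps)
      show "card (V - {u}) < card V"
        using less.prems(1) leaf(1) by (rule card_Diff1_less)
      show "\<forall>x\<in>V - {u}. \<forall>y\<in>V - {u}. adj'\<^sup>*\<^sup>* x y"
        using less.prems(6) rtranclp_avoiding_leaf[OF _ _ _ less.prems(4) leaf(3)]
        unfolding adj'_def by blast
      show "\<not> has_cycle adj'"
        using less.prems(7) has_cycle_mono[of adj' adj] by (auto simp: adj'_def)
      show "finite (V - {u})" "V - {u} \<noteq> {}"
        using less.prems(1) \<open>w \<noteq> u\<close> \<open>w \<in> V\<close> by auto
      show "\<And>x y. adj' x y \<Longrightarrow> x \<in> V - {u} \<and> y \<in> V - {u}"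
        using less.prems(3) unfolding adj'_def by blast
      show "symp adj'"
        using less.prems(4) by (auto simp: adj'_def symp_def)
      show "irreflp adj'"
        using less.prems(5) by (simp add: adj'_def irreflp_def)
    qed
    moreover have "{(x, y). adj x y} = insert (u, w) (insert (w, u) {(x, y). adj' x y})"
      using leaf(2,3) sympD[OF less.prems(4)] unfolding adj'_def by blast
    moreover have "finite {(x, y). adj' x y}"
      by (rule finite_subset[of _ "V \<times> V"]) (use less.prems(1,3) in \<open>auto simp: adj'_def\<close>)
    moreover have "(u, w) \<notin> {(x, y). adj' x y}" "(w, u) \<notin> {(x, y). adj' x y}"
      by (simp_all add: adj'_def)
    moreover have "card V = Suc (card (V - {u}))"
      using less.prems(1) leaf(1) by (rule card_Suc_Diff1[symmetric])
    ultimately show ?thesis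
      using \<open>w \<noteq> u\<close> by simp
  qed
qed

lemma card_nbrs_on_shortest_cycle_le_2:
  assumes cyc: "is_cycle adj xs" and shortest: "\<And>ys. is_cycle adj ys \<Longrightarrow> length xs \<le> length ys"
    and "symp adj" "irreflp adj" "4 \<le> length xs"
  shows "card {x \<in> set xs. adj x z} \<le> 2"
proof (rule ccontr)
  let ?X = "{x \<in> set xs. adj x z}"
  let ?n = "length xs"
  assume "\<not> card ?X \<le> 2"
  then have three: "3 \<le> card ?X"
    by simp
  show False
  proof (cases "z \<in> set xs")
    case True
    then obtain ys where ys: "is_cycle adj ys" "set ys = set xs" "length ys = ?n" "hd ys = z"
      by (rule is_cycle_rotate_to_hd[OF cyc])
    then have "?X \<subseteq> set ys"
      by auto
    then obtain i j k where ijk: "i < j" "j < k" "k < length ys" "ys ! i \<in> ?X" "ys ! j \<in> ?X" "ys ! k \<in> ?X"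
      using three by (rule obtain_three_indices)
    have "ys ! 0 = z"
      using ys(3,4) assms(5) by (metis hd_conv_nth list.size(3) not_numeral_le_zero)
    \<comment> \<open>\<open>ys ! 0 = z\<close> is not a neighbour of z, so \<open>2 \<le> j\<close>\<close>
    then have "i \<noteq> 0"
      using ijk(4) assms(4) by (metis (mono_tags, lifting) irreflpD mem_Collect_eq)
    then have "is_cycle adj (take (j + 1) ys)"
      using ijk \<open>ys ! 0 = z\<close> ys(1,3) by (intro is_cycle_chord) auto
    then have "length xs \<le> j + 1"
      using shortest ijk(3) by fastforce
    then show False
      using ijk(2,3) ys(3) by linarith
  next
    case False
    have detour: False if "p < ?n" "0 < d" "3 * d \<le> ?n" "xs ! p \<in> ?X" "xs ! ((p + d) mod ?n) \<in> ?X" for p d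
    proof -
      have "is_cycle adj (take (d + 1) (rotate p xs) @ [z])"
        using that False \<open>symp adj\<close> by (intro is_cycle_detour[OF cyc]) (auto dest: sympD)
      then have "?n \<le> d + 2"
        using shortest that(3) by fastforce
      then show False
        using that(3) assms(5) by linarith
    qed
    have "?X \<subseteq> set xs"
      by auto
    then obtain i j k where ijk: "i < j" "j < k" "k < ?n" "xs ! i \<in> ?X" "xs ! j \<in> ?X" "xs ! k \<in> ?X"
      using three by (rule obtain_three_indices)
    \<comment> \<open>the three gaps between consecutive neighbours of z add up to the length of the cycle\<close>
    consider "3 * (j - i) \<le> ?n" | "3 * (k - j) \<le> ?n" | "3 * (?n - k + i) \<le> ?n"
      using ijk(1-3) by (cases "3 * (j - i) \<le> ?n"; cases "3 * (k - j) \<le> ?n") auto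
    then show False
    proof cases
      case 1
      then show False
        using detour[of i "j - i"] ijk by simp
    next
      case 2
      then show False
        using detour[of j "k - j"] ijk by simp
    next
      case 3
      have "(k + (?n - k + i)) mod ?n = i"
        using ijk by simp
      then show False
        using detour[of k "?n - k + i"] 3 ijk by simp
    qed
  qed
qed

section \<open>Induced subgraphs of Tanner graphs\<close>

lemma gadj_Inl_Inr [simp]: "gadj E S (Inl v) (Inr c) \<longleftrightarrow> v \<in> S \<and> (v, c) \<in> E"
  by (auto simp: gadj_def)

lemma gadj_Inr_Inl [simp]: "gadj E S (Inr c) (Inl v) \<longleftrightarrow> v \<in> S \<and> (v, c) \<in> E"
  by (auto simp: gadj_def)

lemma gadj_isl: "gadj E S x y \<Longrightarrow> isl y \<longleftrightarrow> \<not> isl x"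
  by (auto simp: gadj_def)

lemma symp_gadj: "symp (gadj E S)"
  by (auto simp: symp_def gadj_def)

lemma irreflp_gadj: "irreflp (gadj E S)"
  by (auto simp: irreflp_def gadj_def)

lemma gadj_in_gverts: "gadj E S x y \<Longrightarrow> x \<in> gverts E S \<and> y \<in> gverts E S"
  by (auto simp: gadj_def gverts_def Nbr_def)

lemma finite_edges_at_variable: "finite E \<Longrightarrow> finite {c. (v, c) \<in> E}"
  by (rule finite_subset[of _ "snd ` E"]) force+

lemma finite_edges_at_check: "finite E \<Longrightarrow> finite {v \<in> S. (v, c) \<in> E}"
  by (rule finite_subset[of _ "fst ` E"]) force+

lemma finite_Nbr: "finite E \<Longrightarrow> finite (Nbr E S)"
  by (rule finite_subset[of _ "snd ` E"]) (force simp: Nbr_def)+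

lemma degS_pos: "finite S \<Longrightarrow> c \<in> Nbr E S \<Longrightarrow> 0 < degS E S c"
  by (auto simp: degS_def Nbr_def card_gt_0_iff)

lemma length_gadj_cycle_ge_4:
  assumes "is_cycle (gadj E S) xs"
  shows "4 \<le> length xs"
proof (rule ccontr)
  assume "\<not> 4 \<le> length xs"
  with assms have "length xs = 3"
    by (simp add: is_cycle_def)
  with assms have step: "\<And>i. i < 3 \<Longrightarrow> gadj E S (xs ! i) (xs ! ((i + 1) mod 3))"
    by (simp add: is_cycle_def)
  have "gadj E S (xs ! 0) (xs ! 1)" "gadj E S (xs ! 1) (xs ! 2)" "gadj E S (xs ! 2) (xs ! 0)"
    using step[of 0] step[of 1] step[of 2] by (simp_all add: numeral_2_eq_2)
  then show False
    by (metis gadj_isl)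
qed

lemma Inl_in_gadj_cycle:
  assumes "is_cycle (gadj E S) xs" "Inl v \<in> set xs"
  shows "v \<in> S"
proof -
  obtain i where "i < length xs" "xs ! i = Inl v"
    using assms(2) by (auto simp: in_set_conv_nth)
  then have "gadj E S (Inl v) (xs ! ((i + 1) mod length xs))"
    using assms(1) by (auto simp: is_cycle_def)
  then show ?thesis
    by (auto simp: gadj_def)
qed

lemma shortest_cycle_elementary:
  fixes E :: "('v \<times> 'c) set"
  assumes cyc: "is_cycle (gadj E L) xs"
    and shortest: "\<And>ys. is_cycle (gadj E L) ys \<Longrightarrow> length xs \<le> length ys"
  shows "elementary E {v. Inl v \<in> set xs}"
  unfolding elementary_def
proof
  fix c
  let ?S = "{v. Inl v \<in> set xs}"
  assume "c \<in> Nbr E ?S"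
  moreover have "finite ?S"
    using finite_vimageI[of "set xs" Inl] by (simp add: vimage_def)
  ultimately have "0 < degS E ?S c"
    by (rule degS_pos[rotated])
  have "Inl ` {v \<in> ?S. (v, c) \<in> E} \<subseteq> {x \<in> set xs. gadj E L x (Inr c)}"
    using Inl_in_gadj_cycle[OF cyc] by auto
  moreover have "finite {x \<in> set xs. gadj E L x (Inr c)}"
    by simp
  ultimately have "card (Inl ` {v \<in> ?S. (v, c) \<in> E} :: ('v + 'c) set) \<le> card {x \<in> set xs. gadj E L x (Inr c)}"
    by (meson card_mono)
  then have "degS E ?S c \<le> card {x \<in> set xs. gadj E L x (Inr c)}"
    by (simp add: degS_def card_image)
  also have "\<dots> \<le> 2"
    using cyc shortest symp_gadj irreflp_gadj length_gadj_cycle_ge_4[OF cyc]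
    by (rule card_nbrs_on_shortest_cycle_le_2)
  finally show "degS E ?S c = 1 \<or> degS E ?S c = 2"
    using \<open>0 < degS E ?S c\<close> by linarith
qed

lemma has_cycle_if_two_even_checks:
  assumes "finite S" "finite E" "S \<noteq> {}"
    and two_even: "\<And>v. v \<in> S \<Longrightarrow> 2 \<le> card {c \<in> even_checks E S. (v, c) \<in> E}"
  shows "has_cycle (gadj E S)"
proof (rule has_cycle_if_min_degree_2)
  let ?V = "Inl ` S \<union> Inr ` even_checks E S"
  show "finite ?V"
    using assms(1,2) finite_Nbr[of E S] by (simp add: even_checks_def)
  show "?V \<noteq> {}"
    using assms(3) by simp
  show "irreflp (gadj E S)"
    by (rule irreflp_gadj)
  fix x
  assume "x \<in> ?V"
  then consider v where "v \<in> S" "x = Inl v" | c where "c \<in> even_checks E S" "x = Inr c"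
    by blast
  then show "\<exists>y\<in>?V. \<exists>z\<in>?V. y \<noteq> z \<and> gadj E S x y \<and> gadj E S x z"
  proof cases
    case (1 v)
    then obtain c1 c2 where c: "c1 \<in> {c \<in> even_checks E S. (v, c) \<in> E}"
        "c2 \<in> {c \<in> even_checks E S. (v, c) \<in> E}" "c1 \<noteq> c2"
      using two_le_card_imp_distinct[OF two_even] by meson
    then have "Inr c1 \<in> ?V" "Inr c2 \<in> ?V" "gadj E S x (Inr c1)" "gadj E S x (Inr c2)"
      using 1 by auto
    then show ?thesis
      using c(3) by blast
  next
    case (2 c)
    then have "0 < degS E S c" "even (degS E S c)"
      using degS_pos[OF assms(1)] by (auto simp: even_checks_def)
    then have "2 \<le> card {v \<in> S. (v, c) \<in> E}"
      unfolding degS_def by presburger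
    then obtain v1 v2 where v: "v1 \<in> {v \<in> S. (v, c) \<in> E}" "v2 \<in> {v \<in> S. (v, c) \<in> E}" "v1 \<noteq> v2"
      using two_le_card_imp_distinct by meson
    then have "Inl v1 \<in> ?V" "Inl v2 \<in> ?V" "gadj E S x (Inl v1)" "gadj E S x (Inl v2)"
      using 2 by auto
    then show ?thesis
      using v(3) by blast
  qed
qed

lemma vdeg_eq_odd_plus_even:
  assumes "finite E" "v \<in> S"
  shows "vdeg E v = card {c \<in> odd_checks E S. (v, c) \<in> E} + card {c \<in> even_checks E S. (v, c) \<in> E}"
proof -
  have "finite {c. (v, c) \<in> E}"
    using assms(1) by (rule finite_edges_at_variable)
  moreover have "{c. (v, c) \<in> E} =
      {c \<in> odd_checks E S. (v, c) \<in> E} \<union> {c \<in> even_checks E S. (v, c) \<in> E}"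
    using assms(2) by (auto simp: odd_checks_def even_checks_def Nbr_def)
  moreover have "{c \<in> odd_checks E S. (v, c) \<in> E} \<inter> {c \<in> even_checks E S. (v, c) \<in> E} = {}"
    by (auto simp: odd_checks_def even_checks_def)
  ultimately show ?thesis
    unfolding vdeg_def by (metis (no_types, lifting) card_Un_disjoint finite_Un)
qed

lemma card_gverts:
  fixes E :: "('v \<times> 'c) set"
  assumes "finite S" "finite E"
  shows "card (gverts E S) = card S + card (Nbr E S)"
proof -
  have "card (gverts E S) = card (Inl ` S :: ('v + 'c) set) + card (Inr ` Nbr E S :: ('v + 'c) set)"
    unfolding gverts_def using assms finite_Nbr by (intro card_Un_disjoint) auto
  then show ?thesis
    by (simp add: card_image)
qed

lemma card_arcs_gadj:
  fixes E :: "('v \<times> 'c) set"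
  assumes "finite E"
  shows "card {(x, y). gadj E S x y} = 2 * card (E \<inter> S \<times> UNIV)"
proof -
  let ?F = "E \<inter> S \<times> UNIV"
  let ?fwd = "\<lambda>(v, c). (Inl v, Inr c) :: ('v + 'c) \<times> ('v + 'c)"
  let ?bwd = "\<lambda>(v, c). (Inr c, Inl v) :: ('v + 'c) \<times> ('v + 'c)"
  have "{(x, y). gadj E S x y} = ?fwd ` ?F \<union> ?bwd ` ?F"
    by (auto simp: gadj_def image_iff)
  moreover have "card (?fwd ` ?F \<union> ?bwd ` ?F) = card (?fwd ` ?F) + card (?bwd ` ?F)"
    using assms by (intro card_Un_disjoint) auto
  moreover have "inj_on ?fwd ?F" "inj_on ?bwd ?F"
    by (auto simp: inj_on_def)
  ultimately show ?thesis
    by (simp add: card_image)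
qed

lemma card_edges_left_regular:
  assumes "finite S" "finite E" "S \<subseteq> L" "left_regular L E d"
  shows "card (E \<inter> S \<times> UNIV) = card S * d"
proof -
  have "E \<inter> S \<times> UNIV = Sigma S (\<lambda>v. {c. (v, c) \<in> E})"
    by auto
  moreover have "finite {c. (v, c) \<in> E}" for v
    using assms(2) by (rule finite_edges_at_variable)
  moreover have "vdeg E v = d" if "v \<in> S" for v
    using assms(3,4) that by (auto simp: left_regular_def)
  ultimately show ?thesis
    using assms(1) by (simp add: card_SigmaI vdeg_def)
qed

lemma card_edges_eq_sum_degS:
  assumes "finite E"
  shows "card (E \<inter> S \<times> UNIV) = (\<Sum>c\<in>Nbr E S. degS E S c)"
proof -
  have "E \<inter> S \<times> UNIV = prod.swap ` Sigma (Nbr E S) (\<lambda>c. {v \<in> S. (v, c) \<in> E})"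
    by (force simp: Nbr_def)
  moreover have "finite {v \<in> S. (v, c) \<in> E}" for c
    using assms by (rule finite_edges_at_check)
  ultimately show ?thesis
    using finite_Nbr[OF assms] by (simp add: card_image degS_def)
qed

lemma two_card_Nbr_le_sum_degS:
  assumes "finite S" "finite E"
  shows "2 * card (Nbr E S) \<le> (\<Sum>c\<in>Nbr E S. degS E S c) + card (odd_checks E S)"
    and "elementary E S \<Longrightarrow> 2 * card (Nbr E S) = (\<Sum>c\<in>Nbr E S. degS E S c) + card (odd_checks E S)"
proof -
  \<comment> \<open>a check of degree d contributes d + [d odd], which is at least 2, with equality iff d \<in> {1, 2}\<close>
  have "card (odd_checks E S) = (\<Sum>c\<in>Nbr E S. of_bool (odd (degS E S c)))"
    using finite_Nbr[OF assms(2)] by (simp add: odd_checks_def Int_def)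
  then have sum: "(\<Sum>c\<in>Nbr E S. degS E S c) + card (odd_checks E S) =
      (\<Sum>c\<in>Nbr E S. degS E S c + of_bool (odd (degS E S c)))"
    by (simp add: sum.distrib)
  have "2 \<le> degS E S c + of_bool (odd (degS E S c))" if "c \<in> Nbr E S" for c
    using degS_pos[OF assms(1) that] by (cases "odd (degS E S c)") auto
  then have "(\<Sum>c\<in>Nbr E S. 2) \<le> (\<Sum>c\<in>Nbr E S. degS E S c + of_bool (odd (degS E S c)))"
    by (rule sum_mono)
  then show "2 * card (Nbr E S) \<le> (\<Sum>c\<in>Nbr E S. degS E S c) + card (odd_checks E S)"
    by (simp add: sum mult.commute)
  assume "elementary E S"
  then have "degS E S c + of_bool (odd (degS E S c)) = 2" if "c \<in> Nbr E S" for c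
    using that by (auto simp: elementary_def)
  then show "2 * card (Nbr E S) = (\<Sum>c\<in>Nbr E S. degS E S c) + card (odd_checks E S)"
    by (simp add: sum mult.commute)
qed

lemma tanner_graph_finite:
  assumes "tanner_graph L R E"
  shows "finite E" and "S \<subseteq> L \<Longrightarrow> finite S"
  using assms unfolding tanner_graph_def by (metis finite_SigmaI finite_subset)+

lemma acyclic_trapping_set_bound:
  fixes E :: "('v \<times> 'c) set"
  assumes "tanner_graph L R E" "left_regular L E dl" "2 \<le> dl" "trapping_set L E S a b"
    and "induced_connected E S" "\<not> has_cycle (gadj E S)"
  shows "a * (dl - 2) + 2 \<le> b" and "elementary E S \<Longrightarrow> b = a * (dl - 2) + 2"
proof -
  have "S \<subseteq> L" "card S = a" "card (odd_checks E S) = b"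
    using assms(4) by (auto simp: trapping_set_def)
  moreover have "finite E" "finite S"
    using tanner_graph_finite[OF assms(1)] \<open>S \<subseteq> L\<close> by blast+
  ultimately have edges: "card (E \<inter> S \<times> UNIV) = a * dl"
    and sum_degS: "(\<Sum>c\<in>Nbr E S. degS E S c) = a * dl"
    using assms(2) card_edges_left_regular card_edges_eq_sum_degS by metis+
  have "card {(x, y). gadj E S x y} + 2 = 2 * card (gverts E S)"
  proof (rule card_arcs_tree)
    show "finite (gverts E S)"
      using \<open>finite S\<close> finite_Nbr[OF \<open>finite E\<close>] by (simp add: gverts_def)
    show "gverts E S \<noteq> {}" "\<forall>x\<in>gverts E S. \<forall>y\<in>gverts E S. (gadj E S)\<^sup>*\<^sup>* x y"
      using assms(5) by (simp_all add: induced_connected_def)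
  qed (simp_all add: gadj_in_gverts symp_gadj irreflp_gadj assms(6))
  then have tree: "a * dl + 1 = a + card (Nbr E S)"
    using card_arcs_gadj[OF \<open>finite E\<close>] card_gverts[OF \<open>finite S\<close> \<open>finite E\<close>] edges \<open>card S = a\<close>
    by simp
  have "2 * a \<le> a * dl" "a * (dl - 2) = a * dl - 2 * a"
    using assms(3) by (simp_all add: diff_mult_distrib2)
  then show "a * (dl - 2) + 2 \<le> b"
    using two_card_Nbr_le_sum_degS(1)[OF \<open>finite S\<close> \<open>finite E\<close>] sum_degS tree \<open>card (odd_checks E S) = b\<close>
    by linarith
  show "b = a * (dl - 2) + 2" if "elementary E S"
    using two_card_Nbr_le_sum_degS(2)[OF \<open>finite S\<close> \<open>finite E\<close> that] sum_degS tree
      \<open>card (odd_checks E S) = b\<close> \<open>2 * a \<le> a * dl\<close> \<open>a * (dl - 2) = a * dl - 2 * a\<close>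
    by linarith
qed

lemma class_T_has_cycle:
  assumes "tanner_graph L R E" "S \<in> class_T L E"
  shows "has_cycle (gadj E S)"
proof (rule has_cycle_if_two_even_checks)
  show "finite S" "finite E"
    using tanner_graph_finite[OF assms(1)] assms(2) by (auto simp: class_T_def)
  show "S \<noteq> {}"
    using assms(2) by (auto simp: class_T_def induced_connected_def gverts_def Nbr_def)
qed (use assms(2) in \<open>auto simp: class_T_def\<close>)

lemma absorbing_set_has_cycle:
  assumes "tanner_graph L R E" "left_regular L E l" "2 \<le> l" "S \<subseteq> L" "S \<noteq> {}" "absorbing_set E S"
  shows "has_cycle (gadj E S)"
proof (rule has_cycle_if_two_even_checks)
  show "finite S" "finite E"
    using tanner_graph_finite[OF assms(1)] assms(4) by blast+
  fix v
  assume "v \<in> S"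
  then have "vdeg E v = l"
    using assms(2,4) by (auto simp: left_regular_def)
  then show "2 \<le> card {c \<in> even_checks E S. (v, c) \<in> E}"
    using vdeg_eq_odd_plus_even[OF \<open>finite E\<close> \<open>v \<in> S\<close>] assms(3,6) \<open>v \<in> S\<close>
    unfolding absorbing_set_def by fastforce
qed (use assms(5) in simp)

lemma ZP_trapping_set_has_cycle:
  assumes "tanner_graph L R E" "left_regular L E l" "3 \<le> l" "S \<subseteq> L" "S \<noteq> {}" "ZP_trapping_set E l S"
  shows "has_cycle (gadj E S)"
proof (rule has_cycle_if_two_even_checks)
  show "finite S" "finite E"
    using tanner_graph_finite[OF assms(1)] assms(4) by blast+
  fix v
  assume "v \<in> S"
  then have "vdeg E v = l" "card {c \<in> odd_checks E S. (v, c) \<in> E} < l - (l - 1) div 2"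
    using assms(2,4,6) by (auto simp: left_regular_def ZP_trapping_set_def)
  then show "2 \<le> card {c \<in> even_checks E S. (v, c) \<in> E}"
    using vdeg_eq_odd_plus_even[OF \<open>finite E\<close> \<open>v \<in> S\<close>] assms(3) by linarith
qed (use assms(5) in simp)

theorem lemma6:
  fixes L :: "'v set" and R :: "'c set" and E :: "('v \<times> 'c) set"
  assumes "tanner_graph L R E" and "min_degree_2 L R E"
  shows
    "(\<forall>dl S a b. left_regular L E dl \<and> 2 \<le> dl \<and> S \<noteq> {} \<and> trapping_set L E S a b \<and>
        induced_connected E S \<and> \<not> has_cycle (gadj E S) \<longrightarrow>
        b \<ge> a * (dl - 2) + 2 \<and> (elementary E S \<longrightarrow> b = a * (dl - 2) + 2))
   \<and> (\<forall>xs. is_cycle (gadj E L) xs \<and> (\<forall>ys. is_cycle (gadj E L) ys \<longrightarrow> length xs \<le> length ys) \<longrightarrow>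
        (let S = {v. Inl v \<in> set xs} in S \<subseteq> L \<and> elementary E S))
   \<and> (\<forall>S\<in>class_T L E. has_cycle (gadj E S))
   \<and> (\<forall>l S. left_regular L E l \<and> 2 \<le> l \<and> S \<subseteq> L \<and> S \<noteq> {} \<and> absorbing_set E S \<longrightarrow>
        has_cycle (gadj E S))
   \<and> (\<forall>l S. left_regular L E l \<and> 3 \<le> l \<and> S \<subseteq> L \<and> S \<noteq> {} \<and> ZP_trapping_set E l S \<longrightarrow>
        has_cycle (gadj E S))"
  apply (intro conjI)
  subgoal
    using acyclic_trapping_set_bound[OF assms(1)] by blast
  subgoal
    using Inl_in_gadj_cycle shortest_cycle_elementary by (fastforce simp: Let_def)
  subgoal
    using class_T_has_cycle[OF assms(1)] by blast
  subgoal
    using absorbing_set_has_cycle[OF assms(1)] by blast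
  subgoal
    using ZP_trapping_set_has_cycle[OF assms(1)] by blast
  done

end
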